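(* Let $d,n\ge1$, let ${\mathbb X}\subseteq{\mathbb P}^2$ be a set of $\binom{d+1}{2}$ points in generic position, and let ${\bf L}=(L_{lj})$ be a $d\times(d+1)$ matrix of linear forms in $\mathfrak{k}[w_1,w_2,w_3]$ whose signed maximal minors generate $I_{\mathbb X}$. Write $L_{lj}=\sum_{k=1}^3\lambda_{ljk}w_k$ with $\lambda_{ljk}\in\mathfrak{k}$. Let ${\bf E}$ be the $\binom{n+1}{2}d\times\binom{n+2}{2}(d+1)$ matrix whose rows are indexed by pairs $(\beta,l)$ with $\beta\in{\mathbb N}^3$, $|\beta|=n-1$, $1\le l\le d$, whose columns are indexed by pairs $(\alpha,j)$ with $\alpha\in{\mathbb N}^3$, $|\alpha|=n$, $1\le j\le d+1$, and whose $((\beta,l),(\alpha,j))$ entry is $\lambda_{ljk}$ if $w^\alpha=w^\beta w_k$ for some $k\in\{1,2,3\}$ and $0$ otherwise. Then ${\bf E}$ has maximal rank, i.e. rank $\binom{n+1}{2}d$.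
   Context: $\mathfrak{k}$ is algebraically closed of characteristic $0$; $w^\alpha=w_1^{\alpha_1}w_2^{\alpha_2}w_3^{\alpha_3}$ and $|\alpha|=\alpha_1+\alpha_2+\alpha_3$. $I_{\mathbb X}\subseteq\mathfrak{k}[w_1,w_2,w_3]$ is the homogeneous ideal of ${\mathbb X}$. "Generic position" means $\dim_{\mathfrak{k}}(\mathfrak{k}[w_1,w_2,w_3]/I_{\mathbb X})_s=\min\{\binom{s+2}{2},|{\mathbb X}|\}$ for all $s$; for such ${\mathbb X}$, $I_{\mathbb X}$ is generated by the maximal minors $F_j=(-1)^{j+1}\det({\bf L}\setminus j\text{-th column})$ of such a $d\times(d+1)$ matrix ${\bf L}$ of linear forms. *)

theory Defs
  imports "HOL-Library.Poly_Mapping" "HOL-Library.Product_Plus" "HOL-Library.Function_Algebras"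
          "HOL-Combinatorics.Permutations" "HOL-Computational_Algebra.Polynomial"
begin

text \<open>Polynomials in k[w1,w2,w3]: finitely supported maps from exponent triples
  (a1,a2,a3) (standing for w1^a1 w2^a2 w3^a3) to coefficients.\<close>
type_synonym 'k poly3 = "(nat \<times> nat \<times> nat) \<Rightarrow>\<^sub>0 'k"

definition deg3 :: "nat \<times> nat \<times> nat \<Rightarrow> nat" where
  "deg3 a = fst a + fst (snd a) + snd (snd a)"

definition evar :: "nat \<Rightarrow> nat \<times> nat \<times> nat" where
  "evar k = (if k = 1 then (1,0,0) else if k = 2 then (0,1,0) else (0,0,1))"

definition var3 :: "nat \<Rightarrow> 'k::{zero,one} poly3" where
  "var3 k = Poly_Mapping.single (evar k) 1"

definition pscale :: "'k::comm_ring_1 \<Rightarrow> 'k poly3 \<Rightarrow> 'k poly3" where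
  "pscale c f = Poly_Mapping.map (\<lambda>x. c * x) f"

definition mono_eval :: "nat \<times> nat \<times> nat \<Rightarrow> 'k::comm_ring_1 \<times> 'k \<times> 'k \<Rightarrow> 'k" where
  "mono_eval a p = fst p ^ fst a * fst (snd p) ^ fst (snd a) * snd (snd p) ^ snd (snd a)"

definition hcomp_eval :: "nat \<Rightarrow> 'k::comm_ring_1 poly3 \<Rightarrow> 'k \<times> 'k \<times> 'k \<Rightarrow> 'k" where
  "hcomp_eval s f p = (\<Sum>a \<in> {a \<in> Poly_Mapping.keys f. deg3 a = s}. Poly_Mapping.lookup f a * mono_eval a p)"

definition forms :: "nat \<Rightarrow> 'k::zero poly3 set" where
  "forms s = {f. \<forall>a \<in> Poly_Mapping.keys f. deg3 a = s}"

text \<open>Points of P^2 are given by nonzero representatives, pairwise non-proportional.\<close>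
definition proj_points :: "('k::field \<times> 'k \<times> 'k) set \<Rightarrow> bool" where
  "proj_points X \<longleftrightarrow> finite X \<and> (0,0,0) \<notin> X \<and>
     (\<forall>p\<in>X. \<forall>q\<in>X. p \<noteq> q \<longrightarrow> \<not> (\<exists>c. p = (c * fst q, c * fst (snd q), c * snd (snd q))))"

definition ideal_of_points :: "('k::field \<times> 'k \<times> 'k) set \<Rightarrow> 'k poly3 set" where
  "ideal_of_points X = {f. \<forall>s. \<forall>p\<in>X. hcomp_eval s f p = 0}"

definition generic_position :: "('k::field \<times> 'k \<times> 'k) set \<Rightarrow> bool" where
  "generic_position X \<longleftrightarrow> (\<forall>s.
     vector_space.dim pscale (forms s :: 'k poly3 set)
       - vector_space.dim pscale (ideal_of_points X \<inter> forms s)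
     = min ((s + 2) choose 2) (card X))"

definition detm :: "nat \<Rightarrow> (nat \<Rightarrow> nat \<Rightarrow> 'a::comm_ring_1) \<Rightarrow> 'a" where
  "detm m M = (\<Sum>\<sigma> | \<sigma> permutes {1..m}. of_int (sign \<sigma>) * (\<Prod>i=1..m. M i (\<sigma> i)))"

definition skip :: "nat \<Rightarrow> nat \<Rightarrow> nat" where
  "skip j i = (if i < j then i else i + 1)"

definition signed_minor :: "nat \<Rightarrow> (nat \<Rightarrow> nat \<Rightarrow> 'a::comm_ring_1) \<Rightarrow> nat \<Rightarrow> 'a" where
  "signed_minor d L j = (-1) ^ (j + 1) * detm d (\<lambda>l i. L l (skip j i))"

definition ideal_gen :: "nat \<Rightarrow> (nat \<Rightarrow> 'a::comm_ring_1) \<Rightarrow> 'a set" where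
  "ideal_gen r F = {f. \<exists>g. f = (\<Sum>j=1..r. g j * F j)}"

definition linmat :: "(nat \<Rightarrow> nat \<Rightarrow> nat \<Rightarrow> 'k::comm_ring_1) \<Rightarrow> nat \<Rightarrow> nat \<Rightarrow> 'k poly3" where
  "linmat lam l j = (\<Sum>k=1..3. pscale (lam l j k) (var3 k))"

definition mat_rank :: "'r set \<Rightarrow> 'c set \<Rightarrow> ('r \<Rightarrow> 'c \<Rightarrow> 'k::field) \<Rightarrow> nat" where
  "mat_rank R C M = vector_space.dim (\<lambda>c v x. c * v x)
      ((\<lambda>r. (\<lambda>x. if x \<in> C then M r x else 0)) ` R)"

definition Erows :: "nat \<Rightarrow> nat \<Rightarrow> ((nat \<times> nat \<times> nat) \<times> nat) set" where
  "Erows n d = {(b, l). deg3 b = n - 1 \<and> 1 \<le> l \<and> l \<le> d}"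

definition Ecols :: "nat \<Rightarrow> nat \<Rightarrow> ((nat \<times> nat \<times> nat) \<times> nat) set" where
  "Ecols n d = {(a, j). deg3 a = n \<and> 1 \<le> j \<and> j \<le> d + 1}"

definition Emat :: "(nat \<Rightarrow> nat \<Rightarrow> nat \<Rightarrow> 'k::field)
    \<Rightarrow> (nat \<times> nat \<times> nat) \<times> nat \<Rightarrow> (nat \<times> nat \<times> nat) \<times> nat \<Rightarrow> 'k" where
  "Emat lam r c = (case r of (b, l) \<Rightarrow> case c of (a, j) \<Rightarrow>
     (if \<exists>k\<in>{1,2,3}. a = b + evar k then lam l j (THE k. k \<in> {1,2,3} \<and> a = b + evar k) else 0))"

end

theory Submission
  imports Defs "HOL-Library.Product_Lexorder"
begin

text \<open>A vector \<open>c\<close> in the left kernel of \<open>E\<close> is the same as a row \<open>(g\<^sub>1, \<dots>, g\<^sub>d)\<close> of forms of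
  degree \<open>n - 1\<close> with \<open>g \<cdot> L = 0\<close>, because the entry \<open>((\<beta>, l), (\<alpha>, j))\<close> of \<open>E\<close> is the
  coefficient of \<open>w\<^sup>\<alpha>\<close> in \<open>w\<^sup>\<beta> L\<^sub>l\<^sub>j\<close>. Expanding the determinant of \<open>L\<close> without column \<open>j\<close>
  along a row \<open>r\<close> shows \<open>g\<^sub>r F\<^sub>j = 0\<close> (Cramer's rule). The polynomial ring is a domain and
  \<open>I\<^sub>X\<close> is not zero (it contains a product of linear forms, one through each point), so some
  \<open>F\<^sub>j\<close> is nonzero; hence \<open>g = 0\<close>, \<open>c = 0\<close>, and the rows of \<open>E\<close> are linearly independent.\<close>

text \<open>With the lexicographic order, exponent triples form an ordered cancellative monoid, which
  makes \<^typ>\<open>'k poly3\<close> an integral domain via the library instance for \<^typ>\<open>'a \<Rightarrow>\<^sub>0 'b\<close>.\<close>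

instance prod :: ("{ordered_cancel_comm_monoid_add, linorder}", "{ordered_cancel_comm_monoid_add, linorder}")
  ordered_cancel_comm_monoid_add
proof
  fix a b c :: "'a \<times> 'b"
  assume "a \<le> b"
  then show "c + a \<le> c + b"
    by (cases a; cases b; cases c) (auto simp: add_strict_left_mono add_left_mono)
qed

definition eval3 :: "'k::comm_ring_1 \<times> 'k \<times> 'k \<Rightarrow> 'k poly3 \<Rightarrow> 'k" where
  "eval3 p f = (\<Sum>a\<in>Poly_Mapping.keys f. Poly_Mapping.lookup f a * mono_eval a p)"

lemma eval3_eq_sum_superset:
  assumes "finite A" "Poly_Mapping.keys f \<subseteq> A"
  shows "eval3 p f = (\<Sum>a\<in>A. Poly_Mapping.lookup f a * mono_eval a p)"
  unfolding eval3_def using assms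
  by (intro sum.mono_neutral_left) (auto simp: in_keys_iff)

lemma eval3_add: "eval3 p (f + g) = eval3 p f + eval3 p g"
proof -
  let ?A = "Poly_Mapping.keys f \<union> Poly_Mapping.keys g"
  have "eval3 p (f + g) = (\<Sum>a\<in>?A. Poly_Mapping.lookup (f + g) a * mono_eval a p)"
    by (rule eval3_eq_sum_superset) (auto simp: keys_add)
  also have "\<dots> = eval3 p f + eval3 p g"
    by (simp add: lookup_add distrib_right sum.distrib eval3_eq_sum_superset[of ?A])
  finally show ?thesis .
qed

lemma eval3_zero [simp]: "eval3 p 0 = 0"
  by (simp add: eval3_def)

lemma eval3_sum: "eval3 p (\<Sum>i\<in>I. f i) = (\<Sum>i\<in>I. eval3 p (f i))"
  by (induction I rule: infinite_finite_induct) (auto simp: eval3_add)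

lemma eval3_single: "eval3 p (Poly_Mapping.single a c) = c * mono_eval a p"
  by (subst eval3_eq_sum_superset[of "{a}"]) auto

lemma mono_eval_add: "mono_eval (a + b) p = mono_eval a p * mono_eval b p"
  by (cases a; cases b; cases p) (simp add: mono_eval_def power_add algebra_simps)

lemma poly3_eq_sum_single:
  "f = (\<Sum>a\<in>Poly_Mapping.keys f. Poly_Mapping.single a (Poly_Mapping.lookup f a))"
  by (rule poly_mapping_eqI) (auto simp: lookup_sum lookup_single when_def in_keys_iff)

lemma eval3_mult: "eval3 p (f * g) = eval3 p f * eval3 p g"
proof -
  have "f * g = (\<Sum>a\<in>Poly_Mapping.keys f. \<Sum>b\<in>Poly_Mapping.keys g.
      Poly_Mapping.single (a + b) (Poly_Mapping.lookup f a * Poly_Mapping.lookup g b))"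
    by (subst (1 2) poly3_eq_sum_single) (simp add: sum_product mult_single)
  then have "eval3 p (f * g) = (\<Sum>a\<in>Poly_Mapping.keys f. \<Sum>b\<in>Poly_Mapping.keys g.
      (Poly_Mapping.lookup f a * mono_eval a p) * (Poly_Mapping.lookup g b * mono_eval b p))"
    by (simp add: eval3_sum eval3_single mono_eval_add algebra_simps)
  then show ?thesis
    by (simp add: eval3_def sum_product)
qed

lemma eval3_prod: "eval3 p (\<Prod>i\<in>I. f i) = (\<Prod>i\<in>I. eval3 p (f i))"
  using eval3_single[of p 0 1]
  by (induction I rule: infinite_finite_induct) (auto simp: eval3_mult mono_eval_def)

lemma deg3_add: "deg3 (a + b) = deg3 a + deg3 b"
  by (cases a; cases b) (simp add: deg3_def)

lemma forms_mult:
  assumes "f \<in> forms s" "g \<in> forms t"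
  shows "f * g \<in> forms (s + t)"
  unfolding forms_def
proof (intro CollectI ballI)
  fix a assume "a \<in> Poly_Mapping.keys (f * g)"
  then obtain b c where "a = b + c" "b \<in> Poly_Mapping.keys f" "c \<in> Poly_Mapping.keys g"
    using keys_mult[of f g] by blast
  then show "deg3 a = s + t" using assms by (simp add: forms_def deg3_add)
qed

lemma one_in_forms: "1 \<in> forms 0"
  by (simp add: forms_def deg3_def flip: single_one)

lemma prod_in_forms:
  "(\<And>i. i \<in> I \<Longrightarrow> f i \<in> forms (s i)) \<Longrightarrow> (\<Prod>i\<in>I. f i) \<in> forms (\<Sum>i\<in>I. s i)"
  by (induction I rule: infinite_finite_induct) (auto simp: one_in_forms forms_mult)

lemma hcomp_eval_form: "f \<in> forms s \<Longrightarrow> hcomp_eval t f p = (if t = s then eval3 p f else 0)"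
proof -
  assume "f \<in> forms s"
  then have "{a \<in> Poly_Mapping.keys f. deg3 a = t} = (if t = s then Poly_Mapping.keys f else {})"
    unfolding forms_def by auto
  then show ?thesis unfolding hcomp_eval_def eval3_def by simp
qed

definition vanishing_lform :: "'k::field \<times> 'k \<times> 'k \<Rightarrow> 'k poly3" where
  "vanishing_lform p = (if fst p = 0 then Poly_Mapping.single (1,0,0) 1
     else Poly_Mapping.single (0,1,0) (fst p) + Poly_Mapping.single (1,0,0) (- fst (snd p)))"

lemma vanishing_lform_in_forms: "vanishing_lform p \<in> forms 1"
  unfolding vanishing_lform_def forms_def
  by (auto simp: deg3_def split: if_splits dest!: subsetD[OF keys_add])

lemma eval3_vanishing_lform: "eval3 p (vanishing_lform p) = 0"
  by (cases p) (auto simp: vanishing_lform_def eval3_add eval3_single mono_eval_def)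

lemma vanishing_lform_nonzero: "vanishing_lform p \<noteq> 0"
proof
  assume "vanishing_lform p = 0"
  then have "Poly_Mapping.lookup (vanishing_lform p) (1,0,0) = 0"
    "Poly_Mapping.lookup (vanishing_lform p) (0,1,0) = 0" by simp_all
  then show False by (auto simp: vanishing_lform_def lookup_add lookup_single split: if_splits)
qed

lemma ideal_of_points_nonzero:
  fixes X :: "('k::field \<times> 'k \<times> 'k) set"
  assumes "finite X"
  obtains f where "f \<in> ideal_of_points X" "f \<noteq> 0"
proof
  let ?f = "\<Prod>p\<in>X. vanishing_lform p"
  show "?f \<noteq> 0" using assms vanishing_lform_nonzero by auto
  have form: "?f \<in> forms (\<Sum>p\<in>X. 1)"
    by (rule prod_in_forms) (rule vanishing_lform_in_forms)
  have "eval3 q ?f = 0" if "q \<in> X" for q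
    using assms that eval3_vanishing_lform[of q] by (auto simp: eval3_prod)
  then show "?f \<in> ideal_of_points X"
    by (simp add: ideal_of_points_def hcomp_eval_form[OF form])
qed

lemma detm_eq_0_if_rows_eq:
  fixes M :: "nat \<Rightarrow> nat \<Rightarrow> 'a::comm_ring_1"
  assumes ab: "a \<in> {1..m}" "b \<in> {1..m}" "a \<noteq> b" and eq: "M a = M b"
  shows "detm m M = 0"
proof -
  let ?t = "Transposition.transpose a b"
  define summand where "summand \<sigma> = of_int (sign \<sigma>) * (\<Prod>i=1..m. M i (\<sigma> i))" for \<sigma> :: "nat \<Rightarrow> nat"
  define Even where "Even = {\<sigma>. \<sigma> permutes {1..m} \<and> evenperm \<sigma>}"
  define Odd where "Odd = {\<sigma>. \<sigma> permutes {1..m} \<and> \<not> evenperm \<sigma>}"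
  have t: "?t permutes {1..m}" using ab by (intro permutes_swap_id)
  have parity: "evenperm (\<sigma> \<circ> ?t) \<longleftrightarrow> \<not> evenperm \<sigma>" if "\<sigma> permutes {1..m}" for \<sigma>
    using evenperm_comp[OF permutes_imp_permutation[OF _ that] permutation_swap_id] ab
    by (simp add: evenperm_swap)
  have summand_swap: "summand (\<sigma> \<circ> ?t) = - summand \<sigma>" if \<sigma>: "\<sigma> permutes {1..m}" for \<sigma>
  proof -
    have "(\<Prod>i=1..m. M i (\<sigma> i)) = (\<Prod>i=1..m. M (?t i) (\<sigma> i))"
      using eq by (intro prod.cong) (auto simp: Transposition.transpose_def)
    also have "\<dots> = (\<Prod>i=1..m. M i (\<sigma> (?t i)))"
      using prod.permute[OF t, of "\<lambda>i. M (?t i) (\<sigma> i)"] by (simp add: comp_def)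
    finally show ?thesis
      using parity[OF \<sigma>] by (simp add: summand_def sign_def)
  qed
  \<comment> \<open>Pairing \<open>\<sigma>\<close> with \<open>\<sigma> \<circ> (a b)\<close> avoids dividing \<open>detm m M = - detm m M\<close> by 2.\<close>
  have "(\<Sum>\<sigma>\<in>Odd. summand \<sigma>) = (\<Sum>\<sigma>\<in>Even. summand (\<sigma> \<circ> ?t))"
    by (rule sum.reindex_bij_witness[where i="\<lambda>\<sigma>. \<sigma> \<circ> ?t" and j="\<lambda>\<sigma>. \<sigma> \<circ> ?t"])
      (auto simp: Even_def Odd_def comp_assoc parity simp del: One_nat_def intro: permutes_compose[OF t])
  also have "\<dots> = - (\<Sum>\<sigma>\<in>Even. summand \<sigma>)"
    by (simp add: Even_def summand_swap sum_negf)
  finally have "(\<Sum>\<sigma>\<in>Even. summand \<sigma>) + (\<Sum>\<sigma>\<in>Odd. summand \<sigma>) = 0" by simp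
  moreover have "detm m M = (\<Sum>\<sigma>\<in>Even. summand \<sigma>) + (\<Sum>\<sigma>\<in>Odd. summand \<sigma>)"
    unfolding detm_def summand_def Even_def Odd_def
    by (subst sum.union_disjoint[symmetric]) (auto intro!: sum.cong finite_subset[OF _ finite_permutations])
  ultimately show ?thesis by simp
qed

lemma detm_row_linear:
  fixes M :: "nat \<Rightarrow> nat \<Rightarrow> 'a::comm_ring_1"
  assumes r: "r \<in> {1..m}"
  shows "detm m (M(r := (\<lambda>i. \<Sum>l\<in>L. g l * M l i))) = (\<Sum>l\<in>L. g l * detm m (M(r := M l)))"
proof -
  have row: "(\<Prod>i=1..m. (N(r := R)) i (\<sigma> i)) = R (\<sigma> r) * (\<Prod>i\<in>{1..m}-{r}. N i (\<sigma> i))"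
    for N R and \<sigma> :: "nat \<Rightarrow> nat"
    using r by (subst prod.remove[of _ r]) (auto intro!: prod.cong)
  show ?thesis
    unfolding detm_def row
    by (simp add: sum_distrib_left sum_distrib_right sum.swap[of _ L] algebra_simps)
qed

lemma detm_eq_0_if_row_eq_0:
  fixes M :: "nat \<Rightarrow> nat \<Rightarrow> 'a::comm_ring_1"
  assumes r: "r \<in> {1..m}" and zero: "\<And>i. i \<in> {1..m} \<Longrightarrow> M r i = 0"
  shows "detm m M = 0"
  unfolding detm_def
proof (intro sum.neutral ballI)
  fix \<sigma> assume "\<sigma> \<in> {\<sigma>. \<sigma> permutes {1..m}}"
  then have "\<sigma> r \<in> {1..m}" using r by (simp only: mem_Collect_eq permutes_in_image)
  then have "(\<Prod>i=1..m. M i (\<sigma> i)) = 0"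
    using r zero by (intro prod_zero) (auto intro!: bexI[of _ r])
  then show "of_int (sign \<sigma>) * (\<Prod>i=1..m. M i (\<sigma> i)) = 0" by simp
qed

lemma detm_mult_eq_0_if_left_kernel:
  fixes M :: "nat \<Rightarrow> nat \<Rightarrow> 'a::comm_ring_1"
  assumes r: "r \<in> {1..m}" and kernel: "\<And>i. i \<in> {1..m} \<Longrightarrow> (\<Sum>l=1..m. g l * M l i) = 0"
  shows "g r * detm m M = 0"
proof -
  have other_rows: "g l * detm m (M(r := M l)) = 0" if "l \<in> {1..m} - {r}" for l
    using detm_eq_0_if_rows_eq[of r m l "M(r := M l)"] r that by auto
  have "0 = detm m (M(r := (\<lambda>i. \<Sum>l=1..m. g l * M l i)))"
    using kernel by (intro detm_eq_0_if_row_eq_0[OF r, symmetric]) auto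
  also have "\<dots> = (\<Sum>l=1..m. g l * detm m (M(r := M l)))"
    by (rule detm_row_linear[OF r])
  also have "\<dots> = g r * detm m (M(r := M r))"
    using r other_rows by (subst sum.remove[of _ r]) auto
  also have "\<dots> = g r * detm m M"
    by simp
  finally show ?thesis by simp
qed

lemma skip_in_range: "i \<in> {1..d} \<Longrightarrow> skip j i \<in> {1..d + 1}"
  by (auto simp: skip_def)

lemma signed_minor_eq_0_if_left_kernel:
  fixes L :: "nat \<Rightarrow> nat \<Rightarrow> 'a::idom"
  assumes "r \<in> {1..d}" "g r \<noteq> 0"
    and kernel: "\<And>j. j \<in> {1..d + 1} \<Longrightarrow> (\<Sum>l=1..d. g l * L l j) = 0"
  shows "signed_minor d L j = 0"
proof -
  have "g r * detm d (\<lambda>l i. L l (skip j i)) = 0"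
    using kernel skip_in_range by (intro detm_mult_eq_0_if_left_kernel[OF assms(1)]) blast
  then show ?thesis using assms(2) by (simp add: signed_minor_def)
qed

lemma sum_apply: "(\<Sum>a\<in>A. f a) x = (\<Sum>a\<in>A. f a x)"
  by (induction A rule: infinite_finite_induct) auto

lemma mat_rank_eq_card_if_rows_independent:
  fixes M :: "'r \<Rightarrow> 'c \<Rightarrow> 'k::field"
  assumes "finite R"
    and indep: "\<And>c. (\<And>x. x \<in> C \<Longrightarrow> (\<Sum>r\<in>R. c r * M r x) = 0) \<Longrightarrow> \<forall>r\<in>R. c r = 0"
  shows "mat_rank R C M = card R"
proof -
  interpret vs: vector_space "\<lambda>c (v :: 'c \<Rightarrow> 'k) x. c * v x"
    by unfold_locales (auto simp: fun_eq_iff algebra_simps)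
  define V where "V r = (\<lambda>x. if x \<in> C then M r x else 0)" for r
  have kernel: "\<forall>r\<in>R. c r = 0" if "(\<Sum>r\<in>R. (\<lambda>x. c r * V r x)) = 0" for c
  proof (rule indep)
    fix x assume "x \<in> C"
    then show "(\<Sum>r\<in>R. c r * M r x) = 0"
      using fun_cong[OF that, of x] by (simp add: sum_apply V_def)
  qed
  have inj: "inj_on V R"
  proof
    fix r1 r2 assume r: "r1 \<in> R" "r2 \<in> R" "V r1 = V r2"
    show "r1 = r2"
    proof (rule ccontr)
      assume ne: "r1 \<noteq> r2"
      define c where "c r = (if r = r1 then 1 else if r = r2 then -1 else 0 :: 'k)" for r
      have "(\<Sum>r\<in>R. (\<lambda>x. c r * V r x)) = (\<Sum>r\<in>{r1, r2}. (\<lambda>x. c r * V r x))"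
        using r \<open>finite R\<close> by (intro sum.mono_neutral_right) (auto simp: c_def fun_eq_iff)
      also have "\<dots> = 0" using ne r by (simp add: c_def fun_eq_iff)
      finally have "c r1 = 0" using kernel r by blast
      then show False by (simp add: c_def)
    qed
  qed
  have "vs.independent (V ` R)"
  proof (rule vs.independent_if_scalars_zero)
    show "finite (V ` R)" using \<open>finite R\<close> by simp
    fix f v assume "(\<Sum>x\<in>V ` R. (\<lambda>y. f x * x y)) = 0" and v: "v \<in> V ` R"
    then have "(\<Sum>r\<in>R. (\<lambda>y. f (V r) * V r y)) = 0"
      by (simp add: sum.reindex[OF inj])
    then show "f v = 0" using kernel[of "\<lambda>r. f (V r)"] v by auto
  qed
  then have "mat_rank R C M = card (V ` R)"
    unfolding mat_rank_def V_def[symmetric] by (rule vs.dim_eq_card_independent)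
  also have "\<dots> = card R" by (rule card_image[OF inj])
  finally show ?thesis .
qed

lemma monomials_eq_image:
  "{b. deg3 b = m} = (\<lambda>(i, j). (i, j, m - i - j)) ` (SIGMA i:{..m}. {..m - i})"
  by (auto simp: deg3_def image_iff)

lemma finite_monomials: "finite {b. deg3 b = m}"
  unfolding monomials_eq_image by simp

lemma card_monomials: "card {b. deg3 b = m} = (m + 2) choose 2"
proof -
  have "card {b. deg3 b = m} = card (SIGMA i:{..m}. {..m - i})"
    unfolding monomials_eq_image by (rule card_image) (auto simp: inj_on_def)
  also have "\<dots> = (\<Sum>i=0..m. Suc (m - i))"
    by (simp add: atMost_atLeast0)
  also have "\<dots> = (\<Sum>i=0..m. Suc i)"
    by (subst sum.atLeastAtMost_rev) simp
  also have "\<dots> = (m + 2) choose 2"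
    by (induction m) (simp_all add: numeral_2_eq_2)
  finally show ?thesis .
qed

lemma linmat_eq_sum_single: "linmat lam l j = (\<Sum>k=1..3. Poly_Mapping.single (evar k) (lam l j k))"
  unfolding linmat_def pscale_def var3_def by simp

lemma evar_cancel: "k \<in> {1,2,3} \<Longrightarrow> k' \<in> {1,2,3} \<Longrightarrow> b + evar k = b + evar k' \<Longrightarrow> k = k'"
  by (cases b) (auto simp: evar_def split: if_splits)

lemma Emat_eq_sum: "Emat lam (b, l) (a, j) = (\<Sum>k=1..3. if b + evar k = a then lam l j k else 0)"
proof (cases "\<exists>k\<in>{1,2,3}. a = b + evar k")
  case True
  then obtain k0 where k0: "k0 \<in> {1,2,3}" "a = b + evar k0" by blast
  have unique: "b + evar k = a \<longleftrightarrow> k = k0" if "k \<in> {1..3}" for k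
    using that k0 evar_cancel[of k k0 b] by (auto simp: eval_nat_numeral le_Suc_eq)
  have "(THE k. k \<in> {1,2,3} \<and> a = b + evar k) = k0"
    using k0 evar_cancel[of _ k0 b] by (intro the_equality) auto
  moreover have "(\<Sum>k=1..3. if b + evar k = a then lam l j k else 0)
      = (\<Sum>k=1..3. if k = k0 then lam l j k else 0)"
    using unique by (intro sum.cong) auto
  moreover have "\<dots> = lam l j k0"
    using k0(1) by auto
  ultimately show ?thesis using True by (simp add: Emat_def)
next
  case False
  then have "b + evar k \<noteq> a" if "k \<in> {1..3}" for k
    using that by (auto simp: eval_nat_numeral le_Suc_eq)
  then show ?thesis using False by (simp add: Emat_def)
qed

lemma lookup_single_mult_linmat:
  "Poly_Mapping.lookup (Poly_Mapping.single b c * linmat lam l j) a = c * Emat lam (b, l) (a, j)"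
  by (simp add: linmat_eq_sum_single sum_distrib_left mult_single lookup_sum lookup_single
      when_def Emat_eq_sum if_distrib cong: if_cong)

lemma Emat_eq_0_if_notin_Ecols:
  assumes "n \<ge> 1" "r \<in> Erows n d" "j \<in> {1..d + 1}" "(a, j) \<notin> Ecols n d"
  shows "Emat lam r (a, j) = 0"
  using assms by (auto simp: Erows_def Ecols_def Emat_def deg3_add evar_def deg3_def split: if_splits)

lemma Erows_eq: "Erows n d = {b. deg3 b = n - 1} \<times> {1..d}"
  unfolding Erows_def by auto

definition row_vector_forms ::
    "nat \<Rightarrow> ((nat \<times> nat \<times> nat) \<times> nat \<Rightarrow> 'k::comm_monoid_add) \<Rightarrow> nat \<Rightarrow> 'k poly3" where
  "row_vector_forms n c l = (\<Sum>b\<in>{b. deg3 b = n - 1}. Poly_Mapping.single b (c (b, l)))"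

lemma lookup_row_vector_forms:
  "deg3 b = n - 1 \<Longrightarrow> Poly_Mapping.lookup (row_vector_forms n c l) b = c (b, l)"
  using finite_monomials by (simp add: row_vector_forms_def lookup_sum lookup_single when_def)

lemma lookup_row_vector_forms_mult_linmat:
  "Poly_Mapping.lookup (\<Sum>l=1..d. row_vector_forms n c l * linmat lam l j) a
     = (\<Sum>r\<in>Erows n d. c r * Emat lam r (a, j))"
proof -
  have "Poly_Mapping.lookup (\<Sum>l=1..d. row_vector_forms n c l * linmat lam l j) a
      = (\<Sum>l=1..d. \<Sum>b\<in>{b. deg3 b = n - 1}. c (b, l) * Emat lam (b, l) (a, j))"
    by (simp add: row_vector_forms_def sum_distrib_right lookup_sum lookup_single_mult_linmat)
  also have "\<dots> = (\<Sum>b\<in>{b. deg3 b = n - 1}. \<Sum>l=1..d. c (b, l) * Emat lam (b, l) (a, j))"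
    by (rule sum.swap)
  also have "\<dots> = (\<Sum>r\<in>Erows n d. c r * Emat lam r (a, j))"
    by (simp add: Erows_eq sum.cartesian_product case_prod_unfold)
  finally show ?thesis .
qed

lemma Emat_rows_independent:
  fixes lam :: "nat \<Rightarrow> nat \<Rightarrow> nat \<Rightarrow> 'k::field"
  assumes "n \<ge> 1" and minor: "signed_minor d (linmat lam) j0 \<noteq> 0"
    and kernel: "\<And>x. x \<in> Ecols n d \<Longrightarrow> (\<Sum>r\<in>Erows n d. c r * Emat lam r x) = 0"
  shows "\<forall>r\<in>Erows n d. c r = 0"
proof -
  have "(\<Sum>l=1..d. row_vector_forms n c l * linmat lam l j) = 0" if j: "j \<in> {1..d + 1}" for j
  proof (rule poly_mapping_eqI)
    fix a
    have "(\<Sum>r\<in>Erows n d. c r * Emat lam r (a, j)) = 0"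
      using kernel[of "(a, j)"] Emat_eq_0_if_notin_Ecols[OF \<open>n \<ge> 1\<close> _ j, of _ a lam]
      by (cases "(a, j) \<in> Ecols n d") auto
    then show "Poly_Mapping.lookup (\<Sum>l=1..d. row_vector_forms n c l * linmat lam l j) a
        = Poly_Mapping.lookup 0 a"
      unfolding lookup_row_vector_forms_mult_linmat by simp
  qed
  then have forms_zero: "row_vector_forms n c l = 0" if "l \<in> {1..d}" for l
    using signed_minor_eq_0_if_left_kernel[OF that] minor by blast
  show ?thesis
  proof
    fix r assume "r \<in> Erows n d"
    then obtain b l where "r = (b, l)" "deg3 b = n - 1" "l \<in> {1..d}"
      by (auto simp: Erows_def)
    then show "c r = 0"
      using lookup_row_vector_forms[of b n c l] forms_zero[of l] by simp
  qed
qed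

theorem lemma2p2:
  fixes X :: "('k::{alg_closed_field, field_char_0} \<times> 'k \<times> 'k) set"
    and lam :: "nat \<Rightarrow> nat \<Rightarrow> nat \<Rightarrow> 'k"
    and d n :: nat
  assumes "d \<ge> 1" and "n \<ge> 1"
    and "proj_points X" and "card X = (d + 1) choose 2"
    and "generic_position X"
    and "ideal_gen (d + 1) (signed_minor d (linmat lam)) = ideal_of_points X"
  shows "mat_rank (Erows n d) (Ecols n d) (Emat lam) = ((n + 1) choose 2) * d"
proof -
  obtain f where "f \<in> ideal_of_points X" "f \<noteq> 0"
    using ideal_of_points_nonzero assms(3) unfolding proj_points_def by blast
  then obtain j where "signed_minor d (linmat lam) j \<noteq> 0"
    using assms(6) unfolding ideal_gen_def by force
  then have "mat_rank (Erows n d) (Ecols n d) (Emat lam) = card (Erows n d)"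
  proof (intro mat_rank_eq_card_if_rows_independent)
    show "finite (Erows n d)"
      using finite_monomials by (simp add: Erows_eq)
  qed (rule Emat_rows_independent[OF \<open>n \<ge> 1\<close>])
  also have "\<dots> = ((n + 1) choose 2) * d"
    using \<open>n \<ge> 1\<close> finite_monomials by (simp add: Erows_eq card_monomials card_cartesian_product)
  finally show ?thesis .
qed

end
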